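(* Let $G$, $P$, $w$ be as in the context, and let $s,t\in V$, $s\neq t$, be such that there is at least one directed path from $s$ to $t$ in $G$. Let $U_s^{\{t,\overline{o}\}}(\alpha)$ be the avoidance hitting cost in the evaporating network $G_\alpha$ (avoided set $B=\emptyset$). Then: (a) $\lim_{\alpha\to 0^+}U_s^{\{t,\overline{o}\}}(\alpha)=L_{st}$, the shortest-path distance from $s$ to $t$ in $G$; (b) if moreover $t$ is reachable from every node reachable from $s$, then at $\alpha=1$, $U_s^{\{t,\overline{o}\}}(1)$ equals the classical hitting cost $U_s^{t}$ of the random walk with transition matrix $P$ on $G$ from $s$ to $t$ (and $U_s^{\{t,\overline{o}\}}(\alpha)\to U_s^t$ as $\alpha\to1^-$); (c) if $0<\alpha_1<\alpha_2\le 1$, then $U_s^{\{t,\overline{o}\}}(\alpha_1)\le U_s^{\{t,\overline{o}\}}(\alpha_2)$.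
   Context: $G=(V,E)$ is a finite directed graph with $n$ nodes; each edge $e_{ij}\in E$ has a positive cost (weight) $w_{ij}$. $P$ is a row-stochastic $n\times n$ transition matrix with $P_{ij}>0$ if and only if $e_{ij}\in E$. $L_{st}$ denotes the minimum total cost of a directed path from $s$ to $t$. Evaporating network: for $\alpha\in(0,1]$, $G_\alpha$ is the Markov chain on $V\cup\{o\}$ ($o$ a new node) with $P_{ij}(\alpha)=P_{ij}\alpha^{w_{ij}}$ for $i,j\in V$, $P_{io}(\alpha)=1-\sum_{j}P_{ij}\alpha^{w_{ij}}$ for $i\in V$, $P_{oo}(\alpha)=1$, $P_{oj}(\alpha)=0$ for $j\neq o$. Avoidance metrics: for a target $t\in V$ and an avoided set $B\subseteq V\setminus\{t\}$, make $t$, $o$ and all nodes of $B$ absorbing in $G_\alpha$; let $\mathcal T=V\setminus(\{t\}\cup B)$. Let $Q_x=Q_x^{\{t,\overline{B\cup\{o\}}\}}(\alpha)$ be the probability that the chain started at $x$ is absorbed at $t$ (so $Q_t=1$, $Q_o=0$, $Q_b=0$ for $b\in B$). Let $F^{\{t\}\cup B\cup\{o\}}(\alpha)=(I-P(\alpha)_{\mathcal T\mathcal T})^{-1}$. For $s,m\in\mathcal T$ with $Q_s>0$, the avoidance fundamental matrix is $F_{sm}^{\{t,\overline{B\cup\{o\}}\}}(\alpha)=F^{\{t\}\cup B\cup\{o\}}_{sm}(\alpha)\,Q_m/Q_s$, and the avoidance hitting cost is $U_s^{\{t,\overline{B\cup\{o\}}\}}(\alpha)=\sum_{m\in\mathcal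 T}F_{sm}^{\{t,\overline{B\cup\{o\}}\}}(\alpha)\,r_m$ with $r_m=\sum_{i:\,e_{mi}\in E}P_{mi}(\alpha)w_{mi}\,Q_i/Q_m$ (terms with $Q_m=0$ omitted). Equivalently, it is the expected total edge cost of the walk from $s$ until absorption, conditioned on being absorbed at $t$. When $B=\emptyset$ these are written $F^{\{t,\overline o\}}$, $U^{\{t,\overline o\}}$, $Q^{\{t,\overline o\}}$. The classical hitting cost $U_s^t$ is the expected total edge cost incurred by the random walk with transition matrix $P$ on $G$ started at $s$ before first hitting $t$. *)

theory Defs
  imports "HOL-Analysis.Analysis"
begin

(* Nodes of G are the elements of a finite type 'a (V = UNIV).
   P :: 'a => 'a => real is the transition matrix, w the edge weights,
   E the edge relation.  A walk is a nonempty vertex list. *)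

fun evap_walk_prob :: "('a \<Rightarrow> 'a \<Rightarrow> real) \<Rightarrow> ('a \<Rightarrow> 'a \<Rightarrow> real) \<Rightarrow> real \<Rightarrow> 'a list \<Rightarrow> real" where
  "evap_walk_prob P w \<alpha> (x # y # ys) = P x y * \<alpha> powr (w x y) * evap_walk_prob P w \<alpha> (y # ys)"
| "evap_walk_prob P w \<alpha> _ = 1"

fun walk_prob :: "('a \<Rightarrow> 'a \<Rightarrow> real) \<Rightarrow> 'a list \<Rightarrow> real" where
  "walk_prob P (x # y # ys) = P x y * walk_prob P (y # ys)"
| "walk_prob P _ = 1"

fun walk_cost :: "('a \<Rightarrow> 'a \<Rightarrow> real) \<Rightarrow> 'a list \<Rightarrow> real" where
  "walk_cost w (x # y # ys) = w x y + walk_cost w (y # ys)"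
| "walk_cost w _ = 0"

definition absorb_walks :: "'a set \<Rightarrow> 'a \<Rightarrow> 'a \<Rightarrow> 'a list set" where
  "absorb_walks B t s = {xs. 2 \<le> length xs \<and> hd xs = s \<and> last xs = t \<and>
      (\<forall>x\<in>set (butlast xs). x \<noteq> t \<and> x \<notin> B)}"

definition avoid_absorb_prob ::
  "('a \<Rightarrow> 'a \<Rightarrow> real) \<Rightarrow> ('a \<Rightarrow> 'a \<Rightarrow> real) \<Rightarrow> real \<Rightarrow> 'a \<Rightarrow> 'a set \<Rightarrow> 'a \<Rightarrow> real" where
  "avoid_absorb_prob P w \<alpha> t B s = infsum (evap_walk_prob P w \<alpha>) (absorb_walks B t s)"

text \<open>Avoidance hitting cost U_s^{t, not(B \<union> {o})}(alpha): expected total edge cost of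
  the walk in G_alpha from s until absorption, conditioned on absorption at t.\<close>
definition avoid_hitting_cost ::
  "('a \<Rightarrow> 'a \<Rightarrow> real) \<Rightarrow> ('a \<Rightarrow> 'a \<Rightarrow> real) \<Rightarrow> real \<Rightarrow> 'a \<Rightarrow> 'a set \<Rightarrow> 'a \<Rightarrow> real" where
  "avoid_hitting_cost P w \<alpha> t B s =
     infsum (\<lambda>xs. evap_walk_prob P w \<alpha> xs * walk_cost w xs) (absorb_walks B t s)
       / avoid_absorb_prob P w \<alpha> t B s"

text \<open>Classical hitting cost U_s^t: expected total edge cost of the walk with
  transition matrix P from s up to the first visit of t (sum over first-passage walks).\<close>
definition hitting_cost :: "('a \<Rightarrow> 'a \<Rightarrow> real) \<Rightarrow> ('a \<Rightarrow> 'a \<Rightarrow> real) \<Rightarrow> 'a \<Rightarrow> 'a \<Rightarrow> real" where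
  "hitting_cost P w t s =
     infsum (\<lambda>xs. walk_prob P xs * walk_cost w xs) (absorb_walks {} t s)"

definition is_dpath :: "('a \<times> 'a) set \<Rightarrow> 'a list \<Rightarrow> 'a \<Rightarrow> 'a \<Rightarrow> bool" where
  "is_dpath E xs s t \<longleftrightarrow> xs \<noteq> [] \<and> hd xs = s \<and> last xs = t \<and>
      (\<forall>i. Suc i < length xs \<longrightarrow> (xs ! i, xs ! Suc i) \<in> E)"

definition shortest_dist :: "('a \<times> 'a) set \<Rightarrow> ('a \<Rightarrow> 'a \<Rightarrow> real) \<Rightarrow> 'a \<Rightarrow> 'a \<Rightarrow> real" where
  "shortest_dist E w s t = Min (walk_cost w ` {xs. is_dpath E xs s t \<and> distinct xs})"

end

theory Submission
  imports Defs
begin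

text \<open>Expanding over the walks that first hit \<open>t\<close>, the avoidance hitting cost is a ratio
  \<open>U(\<alpha>) = N(\<alpha>) / Q(\<alpha>)\<close> with \<open>Q(\<alpha>) = \<Sum> p \<alpha>^c\<close> and \<open>N(\<alpha>) = \<Sum> p \<alpha>^c c\<close>, where \<open>p\<close> is the
  probability of a walk under \<open>P\<close> and \<open>c\<close> its cost. Both series are dominated by their values at
  \<open>\<alpha> = 1\<close>, which converge because the probability of first hitting \<open>t\<close> at step \<open>n\<close> decays
  geometrically: from every node that can reach \<open>t\<close>, the chain hits \<open>t\<close> within a fixed number of
  steps with probability bounded away from 0.

  (a) As \<open>\<alpha> \<rightarrow> 0\<close> the cheapest walks dominate: \<open>N(\<alpha>) - L Q(\<alpha>) = \<alpha>^L \<Sum> p (c - L) \<alpha>^(c - L)\<close>, where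
  the sum tends to 0 by dominated convergence, while \<open>Q(\<alpha>) \<ge> p\<^sub>0 \<alpha>^L\<close> for a shortest path of
  probability \<open>p\<^sub>0\<close>.
  (b) \<open>Q(1)\<close> is the probability of ever reaching \<open>t\<close>, which is 1 when \<open>t\<close> stays reachable along the
  way; continuity at 1 is again dominated convergence.
  (c) Going from \<open>\<alpha>\<^sub>1\<close> to \<open>\<alpha>\<^sub>2\<close> multiplies the weight of a walk by \<open>(\<alpha>\<^sub>2/\<alpha>\<^sub>1)^c\<close>, which increases
  with \<open>c\<close>, so by Chebyshev's sum inequality the weighted mean of \<open>c\<close> increases.\<close>

section \<open>Walks\<close>

fun walk_in :: "('a \<times> 'a) set \<Rightarrow> 'a list \<Rightarrow> bool" where
  "walk_in E (x # y # ys) \<longleftrightarrow> (x, y) \<in> E \<and> walk_in E (y # ys)"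
| "walk_in E _ \<longleftrightarrow> True"

lemma walk_in_iff_nth: "walk_in E xs \<longleftrightarrow> (\<forall>i. Suc i < length xs \<longrightarrow> (xs ! i, xs ! Suc i) \<in> E)"
proof (induction E xs rule: walk_in.induct)
  case (1 E x y ys)
  have "(\<forall>i. Suc i < length (x # y # ys) \<longrightarrow> ((x # y # ys) ! i, (x # y # ys) ! Suc i) \<in> E)
      \<longleftrightarrow> (x, y) \<in> E \<and> (\<forall>i. Suc i < length (y # ys) \<longrightarrow> ((y # ys) ! i, (y # ys) ! Suc i) \<in> E)"
    by (auto simp: All_less_Suc2 less_Suc_eq_0_disj)
  then show ?case using 1 by simp
qed auto

lemma is_dpath_iff_walk_in:
  "is_dpath E xs s t \<longleftrightarrow> xs \<noteq> [] \<and> hd xs = s \<and> last xs = t \<and> walk_in E xs"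
  unfolding is_dpath_def walk_in_iff_nth by blast

lemma finite_distinct_dpaths: "finite {xs :: 'a::finite list. is_dpath E xs s t \<and> distinct xs}"
  by (rule finite_subset[OF _ finite_subset_distinct[of UNIV]]) auto

lemma walk_in_append: "walk_in E (xs @ y # ys) \<longleftrightarrow> walk_in E (xs @ [y]) \<and> walk_in E (y # ys)"
  by (induction xs rule: induct_list012) auto

lemma walk_cost_append: "walk_cost w (xs @ y # ys) = walk_cost w (xs @ [y]) + walk_cost w (y # ys)"
  by (induction xs rule: induct_list012) auto

lemma walk_cost_nonneg:
  assumes "\<And>i j. (i, j) \<in> E \<Longrightarrow> w i j \<ge> 0" "walk_in E xs"
  shows "walk_cost w xs \<ge> 0"
  using assms(2) by (induction xs rule: induct_list012) (auto intro: add_nonneg_nonneg assms(1))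

lemma walk_cost_le_length:
  assumes "\<And>i j. w i j \<le> W" "0 \<le> W"
  shows "walk_cost w xs \<le> W * length xs"
proof (induction xs rule: induct_list012)
  case (3 x y zs)
  then show ?case using assms(1)[of x y] by (simp add: algebra_simps)
qed (use assms in auto)

text \<open>Cutting out the cycle between two visits of a vertex does not increase the cost.\<close>
lemma exists_distinct_walk_le_cost:
  assumes w_nonneg: "\<And>i j. (i, j) \<in> E \<Longrightarrow> w i j \<ge> 0" and "walk_in E xs" "xs \<noteq> []"
  shows "\<exists>ys. walk_in E ys \<and> ys \<noteq> [] \<and> hd ys = hd xs \<and> last ys = last xs
           \<and> distinct ys \<and> walk_cost w ys \<le> walk_cost w xs"
  using assms(2,3)
proof (induction "length xs" arbitrary: xs rule: less_induct)
  case less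
  show ?case
  proof (cases "distinct xs")
    case True
    then show ?thesis using less.prems by auto
  next
    case False
    then obtain as v bs cs where xs: "xs = as @ [v] @ bs @ [v] @ cs"
      using not_distinct_decomp by blast
    define xs' where "xs' = as @ v # cs"
    have walks: "walk_in E (as @ [v])" "walk_in E (v # bs @ [v])" "walk_in E (v # cs)"
      using less.prems(1) walk_in_append[of E as v "bs @ v # cs"] walk_in_append[of E "v # bs" v cs]
      unfolding xs by auto
    then have "walk_in E xs'"
      unfolding xs'_def using walk_in_append[of E as v cs] by simp
    moreover have "walk_cost w xs = walk_cost w (as @ [v]) + walk_cost w (v # bs @ [v]) + walk_cost w (v # cs)"
      using walk_cost_append[of w as v "bs @ v # cs"] walk_cost_append[of w "v # bs" v cs]
      unfolding xs by simp
    then have "walk_cost w xs' \<le> walk_cost w xs"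
      using walk_cost_nonneg[of E w, OF w_nonneg walks(2)] walk_cost_append[of w as v cs]
      unfolding xs'_def by simp
    moreover have "length xs' < length xs" "hd xs' = hd xs" "last xs' = last xs" "xs' \<noteq> []"
      unfolding xs xs'_def by (auto simp: hd_append)
    ultimately show ?thesis using less.hyps by force
  qed
qed

lemma walk_prob_nonneg: "(\<And>i j. M i j \<ge> 0) \<Longrightarrow> walk_prob M xs \<ge> 0"
  by (induction M xs rule: walk_prob.induct) auto

lemma walk_prob_pos_iff_walk_in:
  assumes "\<And>i j. M i j \<ge> 0" "\<And>i j. M i j > 0 \<longleftrightarrow> (i, j) \<in> E"
  shows "walk_prob M xs > 0 \<longleftrightarrow> walk_in E xs"
proof (induction xs rule: induct_list012)
  case (3 x y zs)
  have "walk_prob M (y # zs) \<ge> 0" using walk_prob_nonneg assms(1) by blast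
  then show ?case using 3 assms by (simp add: zero_less_mult_iff)
qed auto

lemma walk_prob_Cons: "ys \<noteq> [] \<Longrightarrow> walk_prob M (x # ys) = M x (hd ys) * walk_prob M ys"
  by (cases ys) auto

lemma evap_walk_prob_eq_powr:
  "\<alpha> > 0 \<Longrightarrow> evap_walk_prob P w \<alpha> xs = walk_prob P xs * \<alpha> powr walk_cost w xs"
  by (induction P w \<alpha> xs rule: evap_walk_prob.induct) (auto simp: powr_add)

section \<open>Infinite sums and limits\<close>

lemma has_sum_diff:
  fixes f g :: "'b \<Rightarrow> 'c::topological_ab_group_add"
  assumes "(f has_sum a) A" "(g has_sum b) A"
  shows "((\<lambda>x. f x - g x) has_sum (a - b)) A"
proof -
  have "((\<lambda>x. - g x) has_sum - b) A" using assms(2) by (simp add: has_sum_uminus)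
  from has_sum_add[OF assms(1) this] show ?thesis by simp
qed

lemma summable_on_diff:
  fixes f g :: "'b \<Rightarrow> 'c::topological_ab_group_add"
  shows "f summable_on A \<Longrightarrow> g summable_on A \<Longrightarrow> (\<lambda>x. f x - g x) summable_on A"
  unfolding summable_on_def using has_sum_diff by blast

lemma infsum_diff:
  fixes f g :: "'b \<Rightarrow> 'c::{topological_ab_group_add, t2_space}"
  shows "f summable_on A \<Longrightarrow> g summable_on A \<Longrightarrow> infsum (\<lambda>x. f x - g x) A = infsum f A - infsum g A"
  by (simp add: has_sum_diff infsumI)

lemma has_sum_UN_disjoint_nonneg:
  fixes f :: "'b \<Rightarrow> real"
  assumes "\<And>n. (f has_sum g n) (B n)" "(g has_sum S) UNIV" "\<And>n y. y \<in> B n \<Longrightarrow> f y \<ge> 0"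
    and "disjoint_family B"
  shows "(f has_sum S) (\<Union>n. B n)"
proof -
  have summable: "(f \<circ> snd) summable_on Sigma UNIV B"
    by (rule summable_on_SigmaI[where g = g]) (use assms in \<open>auto simp: has_sum_imp_summable\<close>)
  have "(g has_sum infsum (f \<circ> snd) (Sigma UNIV B)) UNIV"
    by (rule has_sum_SigmaD[OF has_sum_infsum[OF summable]]) (use assms(1) in simp)
  then have "((f \<circ> snd) has_sum S) (Sigma UNIV B)"
    using assms(2) summable has_sum_unique by (metis has_sum_infsum)
  moreover have "inj_on snd (Sigma UNIV B)"
    using assms(4) by (force simp: disjoint_family_on_def inj_on_def)
  moreover have "snd ` Sigma UNIV B = (\<Union>n. B n)" by force
  ultimately show ?thesis using has_sum_reindex by metis
qed

lemma infsum_tendsto_0_dominated: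
  fixes f :: "'c \<Rightarrow> 'b \<Rightarrow> real"
  assumes g: "g summable_on A"
    and dom: "\<forall>\<^sub>F a in F. \<forall>x\<in>A. \<bar>f a x\<bar> \<le> g x"
    and lim: "\<And>x. x \<in> A \<Longrightarrow> ((\<lambda>a. f a x) \<longlongrightarrow> 0) F"
  shows "((\<lambda>a. infsum (f a) A) \<longlongrightarrow> 0) F"
proof (rule tendstoI)
  fix e :: real assume e: "e > 0"
  have "\<forall>\<^sub>F X in finite_subsets_at_top A. dist (sum g X) (infsum g A) < e / 2"
    using e g by (intro tendstoD infsum_tendsto) auto
  then obtain X where X: "finite X" "X \<subseteq> A" "dist (sum g X) (infsum g A) < e / 2"
    unfolding eventually_finite_subsets_at_top by blast
  have g_tail: "g summable_on (A - X)" using g by (rule summable_on_subset_banach) auto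
  have "infsum g A = sum g X + infsum g (A - X)"
    using infsum_Un_disjoint[of g X "A - X"] X g_tail by (simp add: Un_absorb1)
  then have tail: "infsum g (A - X) < e / 2" using X(3) by (simp add: dist_real_def)
  have "((\<lambda>a. \<Sum>x\<in>X. f a x) \<longlongrightarrow> 0) F"
    by (rule tendsto_null_sum) (use lim X in auto)
  then have "\<forall>\<^sub>F a in F. dist (\<Sum>x\<in>X. f a x) 0 < e / 2"
    using e by (intro tendstoD) auto
  with dom show "\<forall>\<^sub>F a in F. dist (infsum (f a) A) 0 < e"
  proof eventually_elim
    case (elim a)
    have "f a summable_on A"
      by (rule abs_summable_summable, rule summable_on_comparison_test[OF g]) (use elim in auto)
    then have fa_tail: "f a summable_on (A - X)" by (rule summable_on_subset_banach) auto
    have "infsum (f a) A = (\<Sum>x\<in>X. f a x) + infsum (f a) (A - X)"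
      using infsum_Un_disjoint[of "f a" X "A - X"] X fa_tail by (simp add: Un_absorb1)
    moreover have "infsum (f a) (A - X) \<le> infsum g (A - X)"
      by (rule infsum_mono) (use elim fa_tail g_tail in \<open>auto simp: abs_le_iff\<close>)
    moreover have "- infsum g (A - X) \<le> infsum (f a) (A - X)"
      unfolding infsum_uminus[symmetric]
      by (rule infsum_mono) (use elim fa_tail g_tail in \<open>auto simp: abs_le_iff summable_on_uminus\<close>)
    ultimately show ?case using elim tail by (simp add: dist_real_def abs_less_iff) linarith
  qed
qed

lemma infsum_tendsto_dominated:
  fixes f :: "'c \<Rightarrow> 'b \<Rightarrow> real"
  assumes "F \<noteq> bot" and g: "g summable_on A"
    and dom: "\<forall>\<^sub>F a in F. \<forall>x\<in>A. \<bar>f a x\<bar> \<le> g x"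
    and lim: "\<And>x. x \<in> A \<Longrightarrow> ((\<lambda>a. f a x) \<longlongrightarrow> l x) F"
  shows "((\<lambda>a. infsum (f a) A) \<longlongrightarrow> infsum l A) F"
proof -
  have l_bound: "\<bar>l x\<bar> \<le> g x" if "x \<in> A" for x
  proof (rule tendsto_upperbound[OF _ _ assms(1)])
    show "((\<lambda>a. \<bar>f a x\<bar>) \<longlongrightarrow> \<bar>l x\<bar>) F" by (intro tendsto_intros lim that)
    show "\<forall>\<^sub>F a in F. \<bar>f a x\<bar> \<le> g x" using dom by eventually_elim (use that in blast)
  qed
  have summable: "h summable_on A" if "\<And>x. x \<in> A \<Longrightarrow> \<bar>h x\<bar> \<le> g x" for h :: "'b \<Rightarrow> real"
    by (rule abs_summable_summable, rule summable_on_comparison_test[OF g]) (use that in auto)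
  have "((\<lambda>a. infsum (\<lambda>x. f a x - l x) A) \<longlongrightarrow> 0) F"
  proof (rule infsum_tendsto_0_dominated[where g = "\<lambda>x. 2 * g x"])
    show "(\<lambda>x. 2 * g x) summable_on A" using g by (rule summable_on_cmult_right)
    show "\<forall>\<^sub>F a in F. \<forall>x\<in>A. \<bar>f a x - l x\<bar> \<le> 2 * g x"
      using dom by eventually_elim (use l_bound in fastforce)
    show "((\<lambda>a. f a x - l x) \<longlongrightarrow> 0) F" if "x \<in> A" for x
      using tendsto_diff[OF lim[OF that] tendsto_const[of "l x"]] by simp
  qed
  moreover have "\<forall>\<^sub>F a in F. infsum (\<lambda>x. f a x - l x) A = infsum (f a) A - infsum l A"
    using dom by eventually_elim (use summable l_bound in \<open>simp add: infsum_diff\<close>)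
  ultimately have "((\<lambda>a. infsum (f a) A - infsum l A) \<longlongrightarrow> 0) F"
    using tendsto_cong by fastforce
  then show ?thesis by (rule LIM_zero_cancel)
qed

lemma eventually_at_left_1_unit_interval: "\<forall>\<^sub>F \<alpha> in at_left (1::real). 0 < \<alpha> \<and> \<alpha> \<le> 1"
  using eventually_at_left_real[of 0 1] by (rule eventually_mono) auto

lemma eventually_at_right_0_unit_interval: "\<forall>\<^sub>F \<alpha> in at_right (0::real). 0 < \<alpha> \<and> \<alpha> \<le> 1"
  using eventually_at_right_real[of 0 1] by (rule eventually_mono) auto

lemma Chebyshev_sum_weighted:
  fixes q f g :: "'b \<Rightarrow> real"
  assumes "\<And>x. x \<in> A \<Longrightarrow> q x \<ge> 0"
    and "\<And>x y. x \<in> A \<Longrightarrow> y \<in> A \<Longrightarrow> (f x - f y) * (g x - g y) \<ge> 0"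
  shows "(\<Sum>x\<in>A. q x * f x) * (\<Sum>x\<in>A. q x * g x) \<le> (\<Sum>x\<in>A. q x) * (\<Sum>x\<in>A. q x * f x * g x)"
proof -
  define Q F G H where "Q = (\<Sum>x\<in>A. q x)" "F = (\<Sum>x\<in>A. q x * f x)" "G = (\<Sum>x\<in>A. q x * g x)"
    "H = (\<Sum>x\<in>A. q x * f x * g x)"
  have inner: "(\<Sum>y\<in>A. q y * ((f x - f y) * (g x - g y))) = f x * g x * Q - f x * G - g x * F + H" for x
    unfolding Q_F_G_H_def
    by (simp add: sum_distrib_left sum_subtractf sum.distrib algebra_simps)
  have "(\<Sum>x\<in>A. q x * (\<Sum>y\<in>A. q y * ((f x - f y) * (g x - g y)))) = 2 * (Q * H - F * G)"
  proof -
    have "(\<Sum>x\<in>A. q x * (f x * g x * Q - f x * G - g x * F + H))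
        = (\<Sum>x\<in>A. q x * f x * g x) * Q - (\<Sum>x\<in>A. q x * f x) * G - (\<Sum>x\<in>A. q x * g x) * F
          + (\<Sum>x\<in>A. q x) * H"
      by (simp add: sum_distrib_left sum_distrib_right sum_subtractf sum.distrib algebra_simps)
    also have "\<dots> = 2 * (Q * H - F * G)" by (simp add: Q_F_G_H_def)
    finally show ?thesis unfolding inner .
  qed
  moreover have "(\<Sum>x\<in>A. q x * (\<Sum>y\<in>A. q y * ((f x - f y) * (g x - g y)))) \<ge> 0"
    by (intro sum_nonneg mult_nonneg_nonneg[OF assms(1)] assms(2))
  ultimately show ?thesis unfolding Q_F_G_H_def by simp
qed

lemma Chebyshev_infsum_weighted:
  fixes q f g :: "'b \<Rightarrow> real"
  assumes "\<And>x. x \<in> A \<Longrightarrow> q x \<ge> 0"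
    and "\<And>x y. x \<in> A \<Longrightarrow> y \<in> A \<Longrightarrow> (f x - f y) * (g x - g y) \<ge> 0"
    and "q summable_on A" "(\<lambda>x. q x * f x) summable_on A" "(\<lambda>x. q x * g x) summable_on A"
      "(\<lambda>x. q x * f x * g x) summable_on A"
  shows "(\<Sum>\<^sub>\<infinity>x\<in>A. q x * f x) * (\<Sum>\<^sub>\<infinity>x\<in>A. q x * g x)
       \<le> (\<Sum>\<^sub>\<infinity>x\<in>A. q x) * (\<Sum>\<^sub>\<infinity>x\<in>A. q x * f x * g x)"
proof (rule tendsto_le[OF finite_subsets_at_top_neq_bot])
  show "((\<lambda>X. (\<Sum>x\<in>X. q x * f x) * (\<Sum>x\<in>X. q x * g x)) \<longlongrightarrow>
      (\<Sum>\<^sub>\<infinity>x\<in>A. q x * f x) * (\<Sum>\<^sub>\<infinity>x\<in>A. q x * g x)) (finite_subsets_at_top A)"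
    by (intro tendsto_mult infsum_tendsto assms)
  show "((\<lambda>X. (\<Sum>x\<in>X. q x) * (\<Sum>x\<in>X. q x * f x * g x)) \<longlongrightarrow>
      (\<Sum>\<^sub>\<infinity>x\<in>A. q x) * (\<Sum>\<^sub>\<infinity>x\<in>A. q x * f x * g x)) (finite_subsets_at_top A)"
    by (intro tendsto_mult infsum_tendsto assms)
  show "\<forall>\<^sub>F X in finite_subsets_at_top A.
      (\<Sum>x\<in>X. q x * f x) * (\<Sum>x\<in>X. q x * g x) \<le> (\<Sum>x\<in>X. q x) * (\<Sum>x\<in>X. q x * f x * g x)"
    by (rule eventually_finite_subsets_at_top_weakI, rule Chebyshev_sum_weighted) (use assms in blast)+
qed

lemma power_div_le_geometric:
  fixes q :: real
  assumes "0 < q" "q < 1" "0 < K"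
  obtains C r where "0 \<le> r" "r < 1" "\<And>n. q ^ (n div K) \<le> C * r ^ n"
proof
  define r where "r = root K q"
  show r0: "0 \<le> r" and r1: "r < 1" using assms by (auto simp: r_def real_root_lt_1_iff)
  have rK: "r ^ K = q" using assms by (simp add: r_def real_root_pow_pos2)
  show "q ^ (n div K) \<le> 1 / q * r ^ n" for n
  proof -
    have "n \<le> K * (n div K) + K"
      using assms(3) by (metis add_le_cancel_left div_mult_mod_eq mod_less_divisor mult.commute nat_less_le)
    then have "r ^ (K * (n div K) + K) \<le> r ^ n" using r0 r1 by (intro power_decreasing) auto
    then have "q ^ (n div K) * q \<le> r ^ n" by (simp add: power_add power_mult rK)
    then show ?thesis using assms by (simp add: field_simps)
  qed
qed

section \<open>First passage in a finite Markov chain\<close>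

definition first_passage_walks :: "'a \<Rightarrow> 'a \<Rightarrow> nat \<Rightarrow> 'a list set" where
  "first_passage_walks t x n = {xs \<in> absorb_walks {} t x. length xs = n + 2}"

text \<open>The probability that the chain started at \<open>x\<close> visits \<open>t\<close> for the first time at step \<open>n + 1\<close>.\<close>
fun first_passage_prob :: "('a::finite \<Rightarrow> 'a \<Rightarrow> real) \<Rightarrow> 'a \<Rightarrow> nat \<Rightarrow> 'a \<Rightarrow> real" where
  "first_passage_prob M t 0 x = (if x = t then 0 else M x t)"
| "first_passage_prob M t (Suc n) x =
     (if x = t then 0 else (\<Sum>y\<in>UNIV. M x y * first_passage_prob M t n y))"

text \<open>The probability that the chain started at \<open>x\<close> stays in \<open>G\<close> during the steps \<open>0, \<dots>, n\<close>.\<close>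
fun stay_prob :: "('a::finite \<Rightarrow> 'a \<Rightarrow> real) \<Rightarrow> 'a set \<Rightarrow> nat \<Rightarrow> 'a \<Rightarrow> real" where
  "stay_prob M G 0 x = (if x \<in> G then 1 else 0)"
| "stay_prob M G (Suc n) x = (if x \<in> G then (\<Sum>y\<in>UNIV. M x y * stay_prob M G n y) else 0)"

lemma first_passage_prob_target [simp]: "first_passage_prob M t n t = 0"
  by (cases n) auto

lemma stay_prob_outside: "x \<notin> G \<Longrightarrow> stay_prob M G n x = 0"
  by (cases n) auto

lemma first_passage_walks_iff:
  "xs \<in> first_passage_walks t x n \<longleftrightarrow>
     length xs = n + 2 \<and> hd xs = x \<and> last xs = t \<and> t \<notin> set (butlast xs)"
  unfolding first_passage_walks_def absorb_walks_def by auto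

lemma first_passage_walks_0: "first_passage_walks t x 0 = (if x = t then {} else {[x, t]})"
proof -
  have "xs \<in> first_passage_walks t x 0 \<longleftrightarrow> x \<noteq> t \<and> xs = [x, t]" for xs
  proof
    assume xs: "xs \<in> first_passage_walks t x 0"
    then obtain a b where "xs = [a, b]"
      by (auto simp: first_passage_walks_iff length_Suc_conv numeral_2_eq_2)
    then show "x \<noteq> t \<and> xs = [x, t]" using xs by (auto simp: first_passage_walks_iff)
  qed (auto simp: first_passage_walks_iff)
  then show ?thesis by auto
qed

lemma first_passage_walks_Suc:
  "first_passage_walks t x (Suc n) =
     (if x = t then {} else (\<lambda>ys. x # ys) ` (\<Union>y. first_passage_walks t y n))"
proof -
  have "xs \<in> first_passage_walks t x (Suc n) \<longleftrightarrow>
      x \<noteq> t \<and> (\<exists>ys y. xs = x # ys \<and> ys \<in> first_passage_walks t y n)" for xs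
  proof
    assume xs: "xs \<in> first_passage_walks t x (Suc n)"
    then obtain ys where ys: "xs = x # ys" "ys \<noteq> []"
      by (auto simp: first_passage_walks_iff length_Suc_conv)
    then have "butlast xs = x # butlast ys" "last xs = last ys" by auto
    then show "x \<noteq> t \<and> (\<exists>ys y. xs = x # ys \<and> ys \<in> first_passage_walks t y n)"
      using xs ys by (auto simp: first_passage_walks_iff)
  next
    assume "x \<noteq> t \<and> (\<exists>ys y. xs = x # ys \<and> ys \<in> first_passage_walks t y n)"
    then obtain ys y where "x \<noteq> t" "xs = x # ys" "ys \<in> first_passage_walks t y n" by blast
    moreover have "ys \<noteq> []" using \<open>ys \<in> first_passage_walks t y n\<close> by (auto simp: first_passage_walks_iff)
    ultimately show "xs \<in> first_passage_walks t x (Suc n)" by (auto simp: first_passage_walks_iff)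
  qed
  then show ?thesis by auto blast
qed

lemma absorb_walks_eq_UN_first_passage_walks: "absorb_walks {} t x = (\<Union>n. first_passage_walks t x n)"
proof -
  have "xs \<in> first_passage_walks t x (length xs - 2)" if "xs \<in> absorb_walks {} t x" for xs
    using that unfolding first_passage_walks_def absorb_walks_def by auto
  then show ?thesis by (auto simp: first_passage_walks_def)
qed

lemma finite_first_passage_walks: "finite (first_passage_walks t x n :: 'a::finite list set)"
proof (rule finite_subset)
  show "first_passage_walks t x n \<subseteq> {xs. set xs \<subseteq> UNIV \<and> length xs = n + 2}"
    by (auto simp: first_passage_walks_def)
qed (rule finite_lists_length_eq, simp)

lemma disjoint_family_first_passage_walks: "disjoint_family (first_passage_walks t x)"
  unfolding disjoint_family_on_def by (auto simp: first_passage_walks_iff)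

lemma sum_walk_prob_first_passage_walks:
  "(\<Sum>xs\<in>first_passage_walks t x n. walk_prob M xs) = first_passage_prob M t n x"
proof (induction n arbitrary: x)
  case 0
  then show ?case by (simp add: first_passage_walks_0)
next
  case (Suc n)
  have hd_walks: "ys \<noteq> [] \<and> hd ys = y" if "ys \<in> first_passage_walks t y n" for ys y
    using that by (auto simp: first_passage_walks_iff)
  show ?case
  proof (cases "x = t")
    case True
    then show ?thesis by (simp add: first_passage_walks_Suc)
  next
    case False
    have "(\<Sum>xs\<in>first_passage_walks t x (Suc n). walk_prob M xs)
        = (\<Sum>ys\<in>(\<Union>y. first_passage_walks t y n). walk_prob M (x # ys))"
      using False by (simp add: first_passage_walks_Suc sum.reindex)
    also have "\<dots> = (\<Sum>y\<in>UNIV. \<Sum>ys\<in>first_passage_walks t y n. walk_prob M (x # ys))"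
      by (rule sum.UNION_disjoint)
        (auto simp: finite_first_passage_walks dest: hd_walks)
    also have "\<dots> = (\<Sum>y\<in>UNIV. M x y * first_passage_prob M t n y)"
      by (auto simp: Suc[symmetric] sum_distrib_left walk_prob_Cons dest: hd_walks intro!: sum.cong)
    finally show ?thesis using False by simp
  qed
qed

locale stochastic_matrix =
  fixes P :: "'a::finite \<Rightarrow> 'a \<Rightarrow> real"
  assumes nonneg: "\<And>i j. P i j \<ge> 0"
    and row_sum: "\<And>i. (\<Sum>j\<in>UNIV. P i j) = 1"
begin

lemma sum_row_le_1: "(\<Sum>j\<in>S. P x j) \<le> 1"
  using sum_mono2[of UNIV S "P x"] nonneg row_sum by simp

lemma first_passage_prob_nonneg: "first_passage_prob P t n x \<ge> 0"
  by (induction n arbitrary: x) (auto intro!: sum_nonneg mult_nonneg_nonneg nonneg)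

lemma stay_prob_nonneg: "stay_prob P G n x \<ge> 0"
  by (induction n arbitrary: x) (auto intro!: sum_nonneg mult_nonneg_nonneg nonneg)

lemma stay_prob_le_1: "stay_prob P G n x \<le> 1"
proof (induction n arbitrary: x)
  case (Suc n)
  have "(\<Sum>y\<in>UNIV. P x y * stay_prob P G n y) \<le> (\<Sum>y\<in>UNIV. P x y)"
    by (rule sum_mono) (use Suc nonneg in \<open>simp add: mult_left_le\<close>)
  then show ?case using row_sum by simp
qed simp

lemma stay_prob_Suc_eq: "x \<in> G \<Longrightarrow> stay_prob P G (Suc n) x = (\<Sum>y\<in>G. P x y * stay_prob P G n y)"
  by (simp, rule sum.mono_neutral_right) (auto simp: stay_prob_outside)

lemma stay_prob_Suc_le: "stay_prob P G (Suc n) x \<le> stay_prob P G n x"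
proof (induction n arbitrary: x)
  case 0
  then show ?case using stay_prob_le_1[of G "Suc 0" x] stay_prob_outside[of x G]
    by (auto simp del: stay_prob.simps(2))
next
  case (Suc n)
  have "(\<Sum>y\<in>UNIV. P x y * stay_prob P G (Suc n) y) \<le> (\<Sum>y\<in>UNIV. P x y * stay_prob P G n y)"
    by (rule sum_mono) (use Suc nonneg in \<open>simp add: mult_left_mono\<close>)
  then show ?case by simp
qed

lemma stay_prob_antimono: "m \<le> n \<Longrightarrow> stay_prob P G n x \<le> stay_prob P G m x"
  by (induction n rule: dec_induct) (use stay_prob_Suc_le order_trans in blast)+

lemma stay_prob_mono_set: "G \<subseteq> G' \<Longrightarrow> stay_prob P G n x \<le> stay_prob P G' n x"
proof (induction n arbitrary: x)
  case (Suc n)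
  have "(\<Sum>y\<in>UNIV. P x y * stay_prob P G n y) \<le> (\<Sum>y\<in>UNIV. P x y * stay_prob P G' n y)"
    by (rule sum_mono) (use Suc nonneg in \<open>simp add: mult_left_mono\<close>)
  then show ?case using Suc.prems by (auto intro: sum_nonneg mult_nonneg_nonneg nonneg stay_prob_nonneg)
qed auto

lemma stay_prob_add_le:
  assumes "\<And>y. y \<in> G \<Longrightarrow> stay_prob P G k y \<le> B" "0 \<le> B"
  shows "stay_prob P G (m + k) x \<le> B * stay_prob P G m x"
proof (induction m arbitrary: x)
  case 0
  then show ?case using assms by (cases "x \<in> G") (auto simp: stay_prob_outside)
next
  case (Suc m)
  have "(\<Sum>y\<in>UNIV. P x y * stay_prob P G (m + k) y) \<le> (\<Sum>y\<in>UNIV. P x y * (B * stay_prob P G m y))"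
    by (rule sum_mono) (use Suc nonneg in \<open>simp add: mult_left_mono\<close>)
  then show ?case by (simp add: sum_distrib_left algebra_simps)
qed

lemma sum_first_passage_prob_add_stay_prob:
  "x \<noteq> t \<Longrightarrow> (\<Sum>k\<le>n. first_passage_prob P t k x) + stay_prob P (- {t}) (Suc n) x = 1"
proof (induction n arbitrary: x)
  case 0
  then have "stay_prob P (- {t}) (Suc 0) x = (\<Sum>y\<in>- {t}. P x y)"
    by (simp add: stay_prob_Suc_eq del: stay_prob.simps(2))
  then show ?case using 0 row_sum[of x] sum.remove[of UNIV t "P x"] by (simp add: Compl_eq_Diff_UNIV)
next
  case (Suc n)
  have fp_Suc: "first_passage_prob P t (Suc k) x = (\<Sum>y\<in>- {t}. P x y * first_passage_prob P t k y)" for k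
    using Suc.prems by (simp, intro sum.mono_neutral_right) auto
  have "(\<Sum>k\<le>Suc n. first_passage_prob P t k x)
      = P x t + (\<Sum>y\<in>- {t}. P x y * (\<Sum>k\<le>n. first_passage_prob P t k y))"
    using Suc.prems
    by (simp add: sum.atMost_Suc_shift fp_Suc sum.swap[of _ "{..n}"] sum_distrib_left
        del: sum.atMost_Suc first_passage_prob.simps(2))
  then have "(\<Sum>k\<le>Suc n. first_passage_prob P t k x) + stay_prob P (- {t}) (Suc (Suc n)) x
      = P x t + (\<Sum>y\<in>- {t}. P x y *
          ((\<Sum>k\<le>n. first_passage_prob P t k y) + stay_prob P (- {t}) (Suc n) y))"
    using Suc.prems by (simp add: stay_prob_Suc_eq distrib_left sum.distrib del: stay_prob.simps(2))
  also have "\<dots> = P x t + (\<Sum>y\<in>- {t}. P x y)" using Suc.IH by simp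
  also have "\<dots> = 1" using row_sum[of x] sum.remove[of UNIV t "P x"] by (simp add: Compl_eq_Diff_UNIV)
  finally show ?case .
qed

lemma sum_first_passage_prob_add_stay_prob_le:
  assumes "t \<notin> G" "x \<in> G"
  shows "(\<Sum>k\<le>n. first_passage_prob P t k x) + stay_prob P G (Suc n) x \<le> 1"
proof -
  have "stay_prob P G (Suc n) x \<le> stay_prob P (- {t}) (Suc n) x"
    using assms(1) by (intro stay_prob_mono_set) auto
  moreover have "x \<noteq> t" using assms by auto
  ultimately show ?thesis using sum_first_passage_prob_add_stay_prob[of x t n] by linarith
qed

lemma first_passage_prob_le_stay_prob:
  assumes "\<And>n y. y \<notin> G \<Longrightarrow> first_passage_prob P t n y = 0"
  shows "first_passage_prob P t n x \<le> stay_prob P G n x"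
proof (induction n arbitrary: x)
  case 0
  show ?case using assms[of x 0] sum_row_le_1[of x "{t}"] by (cases "x \<in> G") auto
next
  case (Suc n)
  have "(\<Sum>y\<in>UNIV. P x y * first_passage_prob P t n y) \<le> (\<Sum>y\<in>UNIV. P x y * stay_prob P G n y)"
    by (rule sum_mono) (use Suc nonneg in \<open>simp add: mult_left_mono\<close>)
  then show ?case
    using assms[of x "Suc n"] by (cases "x \<in> G") (auto intro: sum_nonneg mult_nonneg_nonneg nonneg stay_prob_nonneg)
qed

text \<open>Within a common horizon \<open>N\<close>, \<open>t\<close> is hit with probability at least \<open>1 - q > 0\<close> from every state
  of \<open>G\<close>, so staying in \<open>G\<close> for \<open>N + 1\<close> steps has probability at most \<open>q\<close>; iterate.\<close>
lemma stay_prob_decay: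
  assumes "t \<notin> G" and hit: "\<And>x. x \<in> G \<Longrightarrow> \<exists>k. first_passage_prob P t k x > 0"
  obtains C r where "0 \<le> r" "r < 1" "\<And>n x. stay_prob P G n x \<le> C * r ^ n"
proof -
  obtain f where f: "\<And>x. x \<in> G \<Longrightarrow> first_passage_prob P t (f x) x > 0" using hit by metis
  define N where "N = (\<Sum>x\<in>G. f x)"
  have hit_N: "(\<Sum>k\<le>N. first_passage_prob P t k x) > 0" if "x \<in> G" for x
  proof -
    have "f x \<le> N" unfolding N_def using that by (intro member_le_sum) auto
    then have "first_passage_prob P t (f x) x \<le> (\<Sum>k\<le>N. first_passage_prob P t k x)"
      by (intro member_le_sum) (auto simp: first_passage_prob_nonneg)
    then show ?thesis using f[OF that] by simp
  qed
  define q where "q = Max (insert (1/2) ((\<lambda>x. 1 - (\<Sum>k\<le>N. first_passage_prob P t k x)) ` G))"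
  have "1/2 \<le> q" unfolding q_def by (rule Max_ge) simp_all
  moreover have "q < 1" unfolding q_def using hit_N by (auto simp: Max_less_iff)
  ultimately have q: "0 < q" "q < 1" by simp_all
  have "stay_prob P G (Suc N) x \<le> q" if "x \<in> G" for x
  proof -
    have "1 - (\<Sum>k\<le>N. first_passage_prob P t k x) \<le> q"
      unfolding q_def by (rule Max_ge) (use that in auto)
    then show ?thesis using sum_first_passage_prob_add_stay_prob_le[OF assms(1) that, of N] by linarith
  qed
  then have iterated: "stay_prob P G (j * Suc N) x \<le> q ^ j" for j x
  proof (induction j arbitrary: x)
    case (Suc j)
    have "stay_prob P G (j * Suc N + Suc N) x \<le> q * stay_prob P G (j * Suc N) x"
      using Suc.prems q by (intro stay_prob_add_le) auto
    also have "\<dots> \<le> q * q ^ j" using Suc q by (intro mult_left_mono) auto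
    finally show ?case by (simp only: mult_Suc add.commute[of "Suc N"] power_Suc)
  qed (simp add: stay_prob_le_1)
  have decay: "stay_prob P G n x \<le> q ^ (n div Suc N)" for n x
  proof -
    have "stay_prob P G n x \<le> stay_prob P G (n div Suc N * Suc N) x"
      by (rule stay_prob_antimono) (rule div_times_less_eq_dividend)
    also have "\<dots> \<le> q ^ (n div Suc N)" by (rule iterated)
    finally show ?thesis .
  qed
  obtain C r where Cr: "0 \<le> r" "r < 1" "\<And>n. q ^ (n div Suc N) \<le> C * r ^ n"
    by (rule power_div_le_geometric[OF q zero_less_Suc[of N]]) blast
  show ?thesis by (rule that[OF Cr(1,2)], rule order_trans[OF decay Cr(3)])
qed

end

section \<open>The evaporating network\<close>

locale evaporating_network = stochastic_matrix P for P :: "'a::finite \<Rightarrow> 'a \<Rightarrow> real" +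
  fixes w :: "'a \<Rightarrow> 'a \<Rightarrow> real" and E :: "('a \<times> 'a) set" and s t :: 'a
  assumes edge_iff: "\<And>i j. P i j > 0 \<longleftrightarrow> (i, j) \<in> E"
    and w_pos: "\<And>i j. (i, j) \<in> E \<Longrightarrow> w i j > 0"
    and s_ne_t: "s \<noteq> t"
    and path: "\<exists>xs. is_dpath E xs s t"
begin

definition reach_t :: "'a set" where
  "reach_t = {x. (x, t) \<in> E\<^sup>*} - {t}"

lemma first_passage_prob_pos_imp_reach: "first_passage_prob P t n y > 0 \<Longrightarrow> (y, t) \<in> E\<^sup>*"
proof (induction n arbitrary: y)
  case 0
  then show ?case using edge_iff by (auto split: if_splits)
next
  case (Suc n)
  then have "(\<Sum>z\<in>UNIV. P y z * first_passage_prob P t n z) > 0" by (auto split: if_splits)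
  then obtain z where "P y z * first_passage_prob P t n z > 0"
    by (metis (no_types, lifting) not_le sum_nonpos)
  then have "(y, z) \<in> E" "first_passage_prob P t n z > 0"
    using nonneg[of y z] first_passage_prob_nonneg[of t n z] edge_iff by (auto simp: zero_less_mult_iff)
  then show ?case using Suc.IH by (meson converse_rtrancl_into_rtrancl)
qed

lemma reach_imp_first_passage_prob_pos:
  "(x, t) \<in> E\<^sup>* \<Longrightarrow> x \<noteq> t \<Longrightarrow> \<exists>k. first_passage_prob P t k x > 0"
proof (induction rule: converse_rtrancl_induct)
  case (step x y)
  show ?case
  proof (cases "y = t")
    case True
    then have "first_passage_prob P t 0 x > 0" using step edge_iff by simp
    then show ?thesis by blast
  next
    case False
    then obtain k where k: "first_passage_prob P t k y > 0" using step by blast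
    have "0 < P x y * first_passage_prob P t k y" using k step edge_iff by simp
    also have "\<dots> \<le> (\<Sum>z\<in>UNIV. P x z * first_passage_prob P t k z)"
      by (rule member_le_sum) (auto intro: mult_nonneg_nonneg nonneg first_passage_prob_nonneg)
    finally have "first_passage_prob P t (Suc k) x > 0" using step by simp
    then show ?thesis by blast
  qed
qed simp

lemma stay_prob_reach_t_geometric:
  obtains C r where "0 \<le> r" "r < 1" "\<And>n x. stay_prob P reach_t n x \<le> C * r ^ n"
proof (rule stay_prob_decay[of t reach_t])
  show "\<exists>k. first_passage_prob P t k x > 0" if "x \<in> reach_t" for x
    using that reach_imp_first_passage_prob_pos unfolding reach_t_def by blast
qed (use that in \<open>auto simp: reach_t_def\<close>)

lemma first_passage_prob_le_stay_prob_reach_t: "first_passage_prob P t n x \<le> stay_prob P reach_t n x"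
proof (rule first_passage_prob_le_stay_prob)
  show "first_passage_prob P t n y = 0" if "y \<notin> reach_t" for n y
    using that first_passage_prob_pos_imp_reach[of n y] first_passage_prob_nonneg[of t n y]
    by (cases "y = t") (auto simp: reach_t_def)
qed

lemma first_passage_prob_geometric:
  obtains C r where "0 \<le> r" "r < 1" "\<And>n x. first_passage_prob P t n x \<le> C * r ^ n"
proof -
  obtain C r where Cr: "0 \<le> r" "r < 1" "\<And>n x. stay_prob P reach_t n x \<le> C * r ^ n"
    by (rule stay_prob_reach_t_geometric) blast
  show ?thesis
    by (rule that[OF Cr(1,2)], rule order_trans[OF first_passage_prob_le_stay_prob_reach_t Cr(3)])
qed

lemma walk_prob_pos_iff: "walk_prob P xs > 0 \<longleftrightarrow> walk_in E xs"
  using walk_prob_pos_iff_walk_in[of P E xs] nonneg edge_iff by blast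

lemma walk_cost_nonneg_if_walk_prob_pos: "walk_prob P xs > 0 \<Longrightarrow> walk_cost w xs \<ge> 0"
  using walk_cost_nonneg[of E w xs] w_pos walk_prob_pos_iff by (meson less_imp_le)

lemma walk_prob_mult_cost_nonneg: "walk_prob P xs * walk_cost w xs \<ge> 0"
  using walk_cost_nonneg_if_walk_prob_pos[of xs] walk_prob_nonneg[of P xs, OF nonneg]
  by (cases "walk_prob P xs > 0") auto

lemma has_sum_walk_prob: "(walk_prob P has_sum (\<Sum>n. first_passage_prob P t n s)) (absorb_walks {} t s)"
proof -
  obtain C r where Cr: "0 \<le> r" "r < 1" "\<And>n x. first_passage_prob P t n x \<le> C * r ^ n"
    by (rule first_passage_prob_geometric) blast
  have "summable (\<lambda>n. first_passage_prob P t n s)"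
    by (rule summable_comparison_test'[where g = "\<lambda>n. C * r ^ n" and N = 0])
      (use Cr first_passage_prob_nonneg in auto)
  then have "((\<lambda>n. first_passage_prob P t n s) has_sum (\<Sum>n. first_passage_prob P t n s)) UNIV"
    using first_passage_prob_nonneg by (intro sums_nonneg_imp_has_sum summable_sums) auto
  moreover have "(walk_prob P has_sum first_passage_prob P t n s) (first_passage_walks t s n)" for n
    using has_sum_finite[OF finite_first_passage_walks, of "walk_prob P"]
    by (simp add: sum_walk_prob_first_passage_walks)
  ultimately show ?thesis unfolding absorb_walks_eq_UN_first_passage_walks
    by (intro has_sum_UN_disjoint_nonneg)
      (auto simp: walk_prob_nonneg nonneg disjoint_family_first_passage_walks)
qed

lemma summable_walk_prob: "walk_prob P summable_on absorb_walks {} t s"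
  using has_sum_walk_prob has_sum_imp_summable by blast

lemma summable_walk_prob_mult_cost:
  "(\<lambda>xs. walk_prob P xs * walk_cost w xs) summable_on absorb_walks {} t s"
proof -
  obtain C r where Cr: "0 \<le> r" "r < 1" "\<And>n x. first_passage_prob P t n x \<le> C * r ^ n"
    by (rule first_passage_prob_geometric) blast
  define W where "W = (\<Sum>(i, j)\<in>UNIV. \<bar>w i j\<bar>)"
  have W: "w i j \<le> W" "0 \<le> W" for i j
    using member_le_sum[of "(i, j)" UNIV "\<lambda>(i, j). \<bar>w i j\<bar>"] unfolding W_def
    by (auto intro: sum_nonneg)
  define g where "g n = (\<Sum>xs\<in>first_passage_walks t s n. walk_prob P xs * walk_cost w xs)" for n
  have cost_le: "walk_cost w xs \<le> W * (n + 2)" if "xs \<in> first_passage_walks t s n" for xs n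
    using walk_cost_le_length[of w W xs] W that by (simp add: first_passage_walks_iff)
  have "g n \<le> (\<Sum>xs\<in>first_passage_walks t s n. walk_prob P xs * (W * (n + 2)))" for n
    unfolding g_def using cost_le walk_prob_nonneg[of P, OF nonneg] by (intro sum_mono mult_left_mono)
  also have "\<dots> n = W * (n + 2) * first_passage_prob P t n s" for n
    by (simp add: sum_distrib_right[symmetric] sum_walk_prob_first_passage_walks mult.commute)
  also have "\<dots> n \<le> 2 * W * C * (real (Suc n) * r ^ n)" for n
  proof -
    have Crn: "0 \<le> C * r ^ n" using Cr(3)[of n s] first_passage_prob_nonneg[of t n s] by linarith
    have "W * (n + 2) * first_passage_prob P t n s \<le> W * (n + 2) * (C * r ^ n)"
      using W(2) Cr(3) by (intro mult_left_mono) auto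
    also have "\<dots> \<le> W * (2 * (n + 1)) * (C * r ^ n)"
      using W(2) Crn by (intro mult_right_mono mult_left_mono) auto
    finally show ?thesis by (simp add: algebra_simps)
  qed
  finally have g_le: "g n \<le> 2 * W * C * (real (Suc n) * r ^ n)" for n .
  have g_nonneg: "g n \<ge> 0" for n unfolding g_def by (auto intro: sum_nonneg walk_prob_mult_cost_nonneg)
  have "summable (\<lambda>n. real (Suc n) * r ^ n)"
    using geometric_deriv_sums[of r] Cr by (auto simp: sums_iff)
  then have "summable (\<lambda>n. 2 * W * C * (real (Suc n) * r ^ n))" by (rule summable_mult)
  then have "summable g"
    by (rule summable_comparison_test'[where N = 0]) (use g_le g_nonneg in auto)
  then have "g summable_on UNIV"
    by (rule summable_nonneg_imp_summable_on_strong) (use g_nonneg in auto)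
  then show ?thesis unfolding absorb_walks_eq_UN_first_passage_walks
    by (intro summable_on_UnionI[where g = g])
      (auto simp: g_def finite_first_passage_walks walk_prob_mult_cost_nonneg
        disjoint_family_first_passage_walks)
qed

definition prob_mass :: "real \<Rightarrow> real" where
  "prob_mass \<alpha> = (\<Sum>\<^sub>\<infinity>xs\<in>absorb_walks {} t s. walk_prob P xs * \<alpha> powr walk_cost w xs)"

definition cost_mass :: "real \<Rightarrow> real" where
  "cost_mass \<alpha> = (\<Sum>\<^sub>\<infinity>xs\<in>absorb_walks {} t s. walk_prob P xs * \<alpha> powr walk_cost w xs * walk_cost w xs)"

lemma avoid_hitting_cost_eq: "0 < \<alpha> \<Longrightarrow> avoid_hitting_cost P w \<alpha> t {} s = cost_mass \<alpha> / prob_mass \<alpha>"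
proof -
  assume "0 < \<alpha>"
  then have "evap_walk_prob P w \<alpha> = (\<lambda>xs. walk_prob P xs * \<alpha> powr walk_cost w xs)"
    by (intro ext) (simp add: evap_walk_prob_eq_powr)
  then show ?thesis
    by (simp add: avoid_hitting_cost_def avoid_absorb_prob_def prob_mass_def cost_mass_def)
qed

lemma hitting_cost_eq: "hitting_cost P w t s = cost_mass 1"
  by (simp add: hitting_cost_def cost_mass_def)

lemma evap_weight_bounds:
  assumes "0 < \<alpha>" "\<alpha> \<le> 1"
  shows "0 \<le> walk_prob P xs * \<alpha> powr walk_cost w xs"
    and "walk_prob P xs * \<alpha> powr walk_cost w xs \<le> walk_prob P xs"
    and "0 \<le> walk_prob P xs * \<alpha> powr walk_cost w xs * walk_cost w xs"
    and "walk_prob P xs * \<alpha> powr walk_cost w xs * walk_cost w xs \<le> walk_prob P xs * walk_cost w xs"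
proof -
  have p: "0 \<le> walk_prob P xs" by (rule walk_prob_nonneg[of P xs, OF nonneg])
  have "0 \<le> walk_cost w xs \<and> \<alpha> powr walk_cost w xs \<le> 1" if "walk_prob P xs > 0"
    using walk_cost_nonneg_if_walk_prob_pos[OF that] assms powr_mono2[of "walk_cost w xs" \<alpha> 1] by simp
  then have "walk_prob P xs = 0 \<or> 0 \<le> walk_cost w xs \<and> \<alpha> powr walk_cost w xs \<le> 1" using p by auto
  then show "0 \<le> walk_prob P xs * \<alpha> powr walk_cost w xs"
    and "walk_prob P xs * \<alpha> powr walk_cost w xs \<le> walk_prob P xs"
    and "0 \<le> walk_prob P xs * \<alpha> powr walk_cost w xs * walk_cost w xs"
    and "walk_prob P xs * \<alpha> powr walk_cost w xs * walk_cost w xs \<le> walk_prob P xs * walk_cost w xs"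
    using p by (auto simp: mult_left_le mult_right_mono)
qed

lemma summable_evap_weight:
  "0 < \<alpha> \<Longrightarrow> \<alpha> \<le> 1 \<Longrightarrow>
    (\<lambda>xs. walk_prob P xs * \<alpha> powr walk_cost w xs) summable_on absorb_walks {} t s"
  by (rule summable_on_comparison_test[OF summable_walk_prob]) (use evap_weight_bounds in auto)

lemma summable_evap_weight_mult_cost:
  "0 < \<alpha> \<Longrightarrow> \<alpha> \<le> 1 \<Longrightarrow>
    (\<lambda>xs. walk_prob P xs * \<alpha> powr walk_cost w xs * walk_cost w xs) summable_on absorb_walks {} t s"
  by (rule summable_on_comparison_test[OF summable_walk_prob_mult_cost]) (use evap_weight_bounds in auto)

lemma shortest_dist_le_walk_cost:
  assumes "xs \<in> absorb_walks {} t s" "walk_prob P xs > 0"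
  shows "shortest_dist E w s t \<le> walk_cost w xs"
proof -
  have xs: "walk_in E xs" "xs \<noteq> []" "hd xs = s" "last xs = t"
    using assms walk_prob_pos_iff unfolding absorb_walks_def by auto
  obtain ys where ys: "walk_in E ys" "ys \<noteq> []" "hd ys = s" "last ys = t" "distinct ys"
      "walk_cost w ys \<le> walk_cost w xs"
    using exists_distinct_walk_le_cost[of E w, OF less_imp_le[OF w_pos] xs(1,2)] xs(3,4) by auto
  have "shortest_dist E w s t \<le> walk_cost w ys"
    unfolding shortest_dist_def
    by (rule Min_le) (use finite_distinct_dpaths ys in \<open>auto simp: is_dpath_iff_walk_in\<close>)
  then show ?thesis using ys(6) by linarith
qed

lemma shortest_walk_exists:
  obtains x0 where "x0 \<in> absorb_walks {} t s" "walk_prob P x0 > 0"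
    "walk_cost w x0 = shortest_dist E w s t"
proof -
  let ?D = "{xs. is_dpath E xs s t \<and> distinct xs}"
  obtain xs where xs: "walk_in E xs" "xs \<noteq> []" "hd xs = s" "last xs = t"
    using path by (auto simp: is_dpath_iff_walk_in)
  then obtain ys where "walk_in E ys" "ys \<noteq> []" "hd ys = s" "last ys = t" "distinct ys"
    using exists_distinct_walk_le_cost[of E w, OF less_imp_le[OF w_pos] xs(1,2)] by auto
  then have "?D \<noteq> {}" by (auto simp: is_dpath_iff_walk_in)
  have "shortest_dist E w s t \<in> walk_cost w ` ?D"
    unfolding shortest_dist_def by (rule Min_in) (use finite_distinct_dpaths \<open>?D \<noteq> {}\<close> in auto)
  then obtain x0 where "shortest_dist E w s t = walk_cost w x0" "x0 \<in> ?D" by (rule imageE)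
  then have x0: "walk_in E x0" "x0 \<noteq> []" "hd x0 = s" "last x0 = t" "distinct x0"
      "walk_cost w x0 = shortest_dist E w s t"
    by (auto simp: is_dpath_iff_walk_in)
  have split: "butlast x0 @ [t] = x0" using append_butlast_last_id[OF x0(2)] x0(4) by simp
  have "distinct (butlast x0 @ [t])" using x0(5) split by simp
  then have "t \<notin> set (butlast x0)" by simp
  moreover have "butlast x0 \<noteq> []" using split x0(3) s_ne_t by force
  then have "2 \<le> length x0"
    using arg_cong[OF split, of length] by (cases "butlast x0") (auto simp del: length_butlast)
  ultimately have "x0 \<in> absorb_walks {} t s"
    using x0(3,4) unfolding absorb_walks_def by blast
  then show ?thesis using that x0(1,6) walk_prob_pos_iff by blast
qed

lemma prob_mass_ge_evap_weight:
  assumes "0 < \<alpha>" "\<alpha> \<le> 1" "x0 \<in> absorb_walks {} t s"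
  shows "walk_prob P x0 * \<alpha> powr walk_cost w x0 \<le> prob_mass \<alpha>"
proof -
  have "(\<Sum>\<^sub>\<infinity>xs\<in>{x0}. walk_prob P xs * \<alpha> powr walk_cost w xs) \<le> prob_mass \<alpha>"
    unfolding prob_mass_def
    by (rule infsum_mono_neutral) (use assms summable_evap_weight evap_weight_bounds in auto)
  then show ?thesis by simp
qed

lemma prob_mass_pos: "0 < \<alpha> \<Longrightarrow> \<alpha> \<le> 1 \<Longrightarrow> prob_mass \<alpha> > 0"
  using shortest_walk_exists prob_mass_ge_evap_weight by (smt (verit) mult_pos_pos powr_gt_zero)

text \<open>The weight at \<open>\<alpha>\<^sub>2\<close> is the weight \<open>q\<close> at \<open>\<alpha>\<^sub>1\<close> times \<open>g = (\<alpha>\<^sub>2/\<alpha>\<^sub>1)^c\<close>, which is increasing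
  in the cost \<open>c\<close>.\<close>
theorem avoid_hitting_cost_mono:
  assumes "0 < \<alpha>\<^sub>1" "\<alpha>\<^sub>1 < \<alpha>\<^sub>2" "\<alpha>\<^sub>2 \<le> 1"
  shows "avoid_hitting_cost P w \<alpha>\<^sub>1 t {} s \<le> avoid_hitting_cost P w \<alpha>\<^sub>2 t {} s"
proof -
  define q where "q xs = walk_prob P xs * \<alpha>\<^sub>1 powr walk_cost w xs" for xs
  define g where "g xs = (\<alpha>\<^sub>2 / \<alpha>\<^sub>1) powr walk_cost w xs" for xs
  have qg: "(\<lambda>xs. q xs * g xs) = (\<lambda>xs. walk_prob P xs * \<alpha>\<^sub>2 powr walk_cost w xs)"
    and qcg: "(\<lambda>xs. q xs * walk_cost w xs * g xs)
      = (\<lambda>xs. walk_prob P xs * \<alpha>\<^sub>2 powr walk_cost w xs * walk_cost w xs)"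
    using assms by (auto simp: q_def g_def powr_divide)
  have "(\<Sum>\<^sub>\<infinity>xs\<in>absorb_walks {} t s. q xs * walk_cost w xs) * (\<Sum>\<^sub>\<infinity>xs\<in>absorb_walks {} t s. q xs * g xs)
      \<le> (\<Sum>\<^sub>\<infinity>xs\<in>absorb_walks {} t s. q xs) * (\<Sum>\<^sub>\<infinity>xs\<in>absorb_walks {} t s. q xs * walk_cost w xs * g xs)"
  proof (rule Chebyshev_infsum_weighted)
    show "(walk_cost w x - walk_cost w y) * (g x - g y) \<ge> 0" for x y
      using assms unfolding g_def
      by (cases "walk_cost w x \<le> walk_cost w y") (auto intro!: mult_nonneg_nonneg mult_nonpos_nonpos)
    show "q xs \<ge> 0" for xs unfolding q_def using assms evap_weight_bounds by simp
    show "q summable_on absorb_walks {} t s" "(\<lambda>xs. q xs * walk_cost w xs) summable_on absorb_walks {} t s"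
      "(\<lambda>xs. q xs * g xs) summable_on absorb_walks {} t s"
      "(\<lambda>xs. q xs * walk_cost w xs * g xs) summable_on absorb_walks {} t s"
      unfolding qg qcg unfolding q_def[abs_def] using assms
      by (auto intro: summable_evap_weight summable_evap_weight_mult_cost)
  qed
  then have "cost_mass \<alpha>\<^sub>1 * prob_mass \<alpha>\<^sub>2 \<le> prob_mass \<alpha>\<^sub>1 * cost_mass \<alpha>\<^sub>2"
    unfolding qg qcg unfolding q_def prob_mass_def cost_mass_def .
  moreover have "prob_mass \<alpha>\<^sub>1 > 0" "prob_mass \<alpha>\<^sub>2 > 0" using assms by (simp_all add: prob_mass_pos)
  ultimately show ?thesis using assms by (simp add: avoid_hitting_cost_eq divide_simps mult.commute)
qed

theorem avoid_hitting_cost_tendsto_1: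
  "((\<lambda>\<alpha>. avoid_hitting_cost P w \<alpha> t {} s) \<longlongrightarrow> avoid_hitting_cost P w 1 t {} s) (at_left 1)"
proof -
  note ev = eventually_at_left_1_unit_interval
  have "(prob_mass \<longlongrightarrow> prob_mass 1) (at_left 1)"
    unfolding prob_mass_def
  proof (rule infsum_tendsto_dominated[OF _ summable_walk_prob])
    show "\<forall>\<^sub>F \<alpha> in at_left 1. \<forall>xs\<in>absorb_walks {} t s.
        \<bar>walk_prob P xs * \<alpha> powr walk_cost w xs\<bar> \<le> walk_prob P xs"
      using ev by eventually_elim (use evap_weight_bounds in auto)
  qed (auto intro!: tendsto_eq_intros)
  moreover have "(cost_mass \<longlongrightarrow> cost_mass 1) (at_left 1)"
    unfolding cost_mass_def
  proof (rule infsum_tendsto_dominated[OF _ summable_walk_prob_mult_cost])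
    show "\<forall>\<^sub>F \<alpha> in at_left 1. \<forall>xs\<in>absorb_walks {} t s.
        \<bar>walk_prob P xs * \<alpha> powr walk_cost w xs * walk_cost w xs\<bar> \<le> walk_prob P xs * walk_cost w xs"
      using ev by eventually_elim (use evap_weight_bounds in auto)
  qed (auto intro!: tendsto_eq_intros)
  ultimately have "((\<lambda>\<alpha>. cost_mass \<alpha> / prob_mass \<alpha>) \<longlongrightarrow> cost_mass 1 / prob_mass 1) (at_left 1)"
    using prob_mass_pos[of 1] by (intro tendsto_divide) auto
  moreover have "\<forall>\<^sub>F \<alpha> in at_left 1. cost_mass \<alpha> / prob_mass \<alpha> = avoid_hitting_cost P w \<alpha> t {} s"
    using ev by eventually_elim (simp add: avoid_hitting_cost_eq)
  ultimately show ?thesis by (simp add: tendsto_cong avoid_hitting_cost_eq)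
qed

lemma stay_prob_le_stay_prob_reach_t:
  assumes R: "\<forall>x. (s, x) \<in> E\<^sup>* \<longrightarrow> (x, t) \<in> E\<^sup>*"
  shows "(s, x) \<in> E\<^sup>* \<Longrightarrow> stay_prob P (- {t}) n x \<le> stay_prob P reach_t n x"
proof (induction n arbitrary: x)
  case 0
  then show ?case using R by (auto simp: reach_t_def)
next
  case (Suc n)
  show ?case
  proof (cases "x = t")
    case False
    have "P x y * stay_prob P (- {t}) n y \<le> P x y * stay_prob P reach_t n y" for y
    proof (cases "P x y > 0")
      case True
      then have "(s, y) \<in> E\<^sup>*" using Suc.prems edge_iff by (meson rtrancl.rtrancl_into_rtrancl)
      then show ?thesis using Suc.IH nonneg by (simp add: mult_left_mono)
    qed (use nonneg[of x y] in simp)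
    moreover have "x \<in> reach_t" using R Suc.prems False by (auto simp: reach_t_def)
    ultimately show ?thesis using False by (simp add: sum_mono)
  qed (use stay_prob_nonneg in \<open>simp add: stay_prob_outside del: stay_prob.simps(2)\<close>)
qed

lemma prob_mass_1:
  assumes "\<forall>x. (s, x) \<in> E\<^sup>* \<longrightarrow> (x, t) \<in> E\<^sup>*"
  shows "prob_mass 1 = 1"
proof -
  obtain C r where Cr: "0 \<le> r" "r < 1" "\<And>n x. stay_prob P reach_t n x \<le> C * r ^ n"
    by (rule stay_prob_reach_t_geometric) blast
  have "(\<lambda>n. stay_prob P (- {t}) (Suc n) s) \<longlonglongrightarrow> 0"
  proof (rule tendsto_sandwich[of "\<lambda>_. 0" _ _ "\<lambda>n. C * r ^ n"])
    show "\<forall>\<^sub>F n in sequentially. stay_prob P (- {t}) (Suc n) s \<le> C * r ^ n"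
      using stay_prob_Suc_le stay_prob_le_stay_prob_reach_t[OF assms rtrancl_refl] Cr(3)
      by (meson always_eventually order_trans)
    show "(\<lambda>n. C * r ^ n) \<longlonglongrightarrow> 0" using Cr by (intro tendsto_mult_right_zero LIMSEQ_power_zero) auto
    show "\<forall>\<^sub>F n in sequentially. 0 \<le> stay_prob P (- {t}) (Suc n) s"
      by (intro always_eventually allI stay_prob_nonneg)
  qed simp
  from tendsto_diff[OF tendsto_const[of 1] this]
  have "(\<lambda>n. 1 - stay_prob P (- {t}) (Suc n) s) \<longlonglongrightarrow> 1" by simp
  moreover have "(\<lambda>n. 1 - stay_prob P (- {t}) (Suc n) s) = (\<lambda>n. \<Sum>k\<le>n. first_passage_prob P t k s)"
    using sum_first_passage_prob_add_stay_prob[OF s_ne_t] by (intro ext) (metis add_diff_cancel_right')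
  ultimately have "(\<lambda>n. \<Sum>k\<le>n. first_passage_prob P t k s) \<longlonglongrightarrow> 1" by simp
  then have "(\<Sum>n. first_passage_prob P t n s) = 1" by (simp add: sums_def_le sums_unique[symmetric])
  then show ?thesis using has_sum_walk_prob by (simp add: prob_mass_def infsumI)
qed

theorem avoid_hitting_cost_1_eq_hitting_cost:
  "\<forall>x. (s, x) \<in> E\<^sup>* \<longrightarrow> (x, t) \<in> E\<^sup>* \<Longrightarrow> avoid_hitting_cost P w 1 t {} s = hitting_cost P w t s"
  by (simp add: avoid_hitting_cost_eq prob_mass_1 hitting_cost_eq)

definition excess_mass :: "real \<Rightarrow> real" where
  "excess_mass \<alpha> = (\<Sum>\<^sub>\<infinity>xs\<in>absorb_walks {} t s. walk_prob P xs * (walk_cost w xs - shortest_dist E w s t)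
     * \<alpha> powr (walk_cost w xs - shortest_dist E w s t))"

lemma excess_weight_bounds:
  assumes "xs \<in> absorb_walks {} t s" "0 < \<alpha>" "\<alpha> \<le> 1"
  defines "d \<equiv> walk_cost w xs - shortest_dist E w s t"
  shows "0 \<le> walk_prob P xs * d * \<alpha> powr d" "walk_prob P xs * d * \<alpha> powr d \<le> walk_prob P xs * d"
proof -
  have "walk_prob P xs = 0 \<or> 0 \<le> d \<and> \<alpha> powr d \<le> 1"
    using walk_prob_nonneg[of P xs, OF nonneg] shortest_dist_le_walk_cost[OF assms(1)] assms(2,3)
      powr_mono2[of d \<alpha> 1] unfolding d_def by fastforce
  then show "0 \<le> walk_prob P xs * d * \<alpha> powr d" "walk_prob P xs * d * \<alpha> powr d \<le> walk_prob P xs * d"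
    using walk_prob_nonneg[of P xs, OF nonneg] by (auto simp: mult_left_le)
qed

lemma summable_excess:
  "(\<lambda>xs. walk_prob P xs * (walk_cost w xs - shortest_dist E w s t)) summable_on absorb_walks {} t s"
  using summable_on_diff[OF summable_walk_prob_mult_cost summable_on_cmult_left[OF summable_walk_prob]]
  by (simp add: right_diff_distrib)

lemma excess_mass_tendsto_0: "(excess_mass \<longlongrightarrow> 0) (at_right 0)"
  unfolding excess_mass_def
proof (rule infsum_tendsto_0_dominated[OF summable_excess])
  show "\<forall>\<^sub>F \<alpha> in at_right 0. \<forall>xs\<in>absorb_walks {} t s.
      \<bar>walk_prob P xs * (walk_cost w xs - shortest_dist E w s t) * \<alpha> powr (walk_cost w xs - shortest_dist E w s t)\<bar>
        \<le> walk_prob P xs * (walk_cost w xs - shortest_dist E w s t)"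
    using eventually_at_right_0_unit_interval by eventually_elim (use excess_weight_bounds in auto)
  fix xs assume xs: "xs \<in> absorb_walks {} t s"
  show "((\<lambda>\<alpha>. walk_prob P xs * (walk_cost w xs - shortest_dist E w s t)
      * \<alpha> powr (walk_cost w xs - shortest_dist E w s t)) \<longlongrightarrow> 0) (at_right 0)"
  proof (cases "walk_prob P xs > 0 \<and> walk_cost w xs \<noteq> shortest_dist E w s t")
    case True
    then have "walk_cost w xs - shortest_dist E w s t > 0"
      using shortest_dist_le_walk_cost[OF xs] by force
    then have "((\<lambda>\<alpha>::real. \<alpha> powr (walk_cost w xs - shortest_dist E w s t)) \<longlongrightarrow> 0) (at_right 0)"
      by (intro tendsto_zero_powrI tendsto_ident_at)
        (auto intro: eventually_mono[OF eventually_at_right_less] less_imp_le)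
    then show ?thesis by (rule tendsto_mult_right_zero)
  next
    case False
    then have "walk_prob P xs = 0 \<or> walk_cost w xs = shortest_dist E w s t"
      using walk_prob_nonneg[of P xs, OF nonneg] by auto
    then show ?thesis by auto
  qed
qed

lemma cost_mass_minus_shortest_dist:
  assumes "0 < \<alpha>" "\<alpha> \<le> 1"
  shows "cost_mass \<alpha> - shortest_dist E w s t * prob_mass \<alpha> = \<alpha> powr shortest_dist E w s t * excess_mass \<alpha>"
proof -
  let ?L = "shortest_dist E w s t"
  have "cost_mass \<alpha> - ?L * prob_mass \<alpha> = (\<Sum>\<^sub>\<infinity>xs\<in>absorb_walks {} t s.
      walk_prob P xs * \<alpha> powr walk_cost w xs * walk_cost w xs - ?L * (walk_prob P xs * \<alpha> powr walk_cost w xs))"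
    unfolding cost_mass_def prob_mass_def using assms
    by (simp add: infsum_diff summable_evap_weight_mult_cost summable_evap_weight summable_on_cmult_right
        infsum_cmult_right)
  also have "\<dots> = (\<Sum>\<^sub>\<infinity>xs\<in>absorb_walks {} t s. \<alpha> powr ?L *
      (walk_prob P xs * (walk_cost w xs - ?L) * \<alpha> powr (walk_cost w xs - ?L)))"
    using assms by (intro infsum_cong) (simp add: powr_diff field_simps)
  also have "\<dots> = \<alpha> powr ?L * excess_mass \<alpha>"
    unfolding excess_mass_def
    by (rule infsum_cmult_right, rule summable_on_comparison_test[OF summable_excess])
      (use assms excess_weight_bounds in auto)
  finally show ?thesis .
qed

theorem avoid_hitting_cost_tendsto_0:
  "((\<lambda>\<alpha>. avoid_hitting_cost P w \<alpha> t {} s) \<longlongrightarrow> shortest_dist E w s t) (at_right 0)"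
proof -
  let ?L = "shortest_dist E w s t"
  obtain x0 where x0: "x0 \<in> absorb_walks {} t s" "walk_prob P x0 > 0" "walk_cost w x0 = ?L"
    by (rule shortest_walk_exists)
  have "\<forall>\<^sub>F \<alpha> in at_right 0. norm (avoid_hitting_cost P w \<alpha> t {} s - ?L) \<le> excess_mass \<alpha> / walk_prob P x0"
    using eventually_at_right_0_unit_interval
  proof eventually_elim
    case (elim \<alpha>)
    then have lower: "walk_prob P x0 * \<alpha> powr ?L \<le> prob_mass \<alpha>"
      using prob_mass_ge_evap_weight[OF _ _ x0(1)] x0(3) by auto
    have excess_nonneg: "excess_mass \<alpha> \<ge> 0"
      unfolding excess_mass_def by (rule infsum_nonneg) (use elim excess_weight_bounds in auto)
    have eq: "avoid_hitting_cost P w \<alpha> t {} s - ?L = \<alpha> powr ?L * excess_mass \<alpha> / prob_mass \<alpha>"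
      using elim prob_mass_pos[of \<alpha>] cost_mass_minus_shortest_dist[of \<alpha>]
      by (simp add: avoid_hitting_cost_eq field_simps)
    have "\<alpha> powr ?L * excess_mass \<alpha> / prob_mass \<alpha> \<le> \<alpha> powr ?L * excess_mass \<alpha> / (walk_prob P x0 * \<alpha> powr ?L)"
      using elim lower excess_nonneg x0(2) prob_mass_pos[of \<alpha>] by (intro divide_left_mono) auto
    also have "\<dots> = excess_mass \<alpha> / walk_prob P x0" using elim by simp
    finally show ?case
      using eq elim excess_nonneg prob_mass_pos[of \<alpha>] by simp
  qed
  moreover have "((\<lambda>\<alpha>. excess_mass \<alpha> / walk_prob P x0) \<longlongrightarrow> 0) (at_right 0)"
    using tendsto_divide_zero[OF excess_mass_tendsto_0] by simp
  ultimately have "((\<lambda>\<alpha>. avoid_hitting_cost P w \<alpha> t {} s - ?L) \<longlongrightarrow> 0) (at_right 0)"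
    by (rule Lim_null_comparison)
  then show ?thesis by (rule LIM_zero_cancel)
qed

end

theorem mainTheorem2:
  fixes P w :: "'a::finite \<Rightarrow> 'a \<Rightarrow> real"
    and E :: "('a \<times> 'a) set"
    and s t :: 'a
  assumes P_nonneg: "\<And>i j. P i j \<ge> 0"
    and P_stoch: "\<And>i. (\<Sum>j\<in>UNIV. P i j) = 1"
    and P_edge: "\<And>i j. P i j > 0 \<longleftrightarrow> (i, j) \<in> E"
    and w_pos: "\<And>i j. (i, j) \<in> E \<Longrightarrow> w i j > 0"
    and st: "s \<noteq> t"
    and path: "\<exists>xs. is_dpath E xs s t"
  shows "((\<lambda>\<alpha>. avoid_hitting_cost P w \<alpha> t {} s) \<longlongrightarrow> shortest_dist E w s t) (at_right 0)
     \<and> ((\<forall>x. (s, x) \<in> E\<^sup>* \<longrightarrow> (x, t) \<in> E\<^sup>*) \<longrightarrow>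
           avoid_hitting_cost P w 1 t {} s = hitting_cost P w t s \<and>
           ((\<lambda>\<alpha>. avoid_hitting_cost P w \<alpha> t {} s) \<longlongrightarrow> hitting_cost P w t s) (at_left 1))
     \<and> (\<forall>\<alpha>1 \<alpha>2. 0 < \<alpha>1 \<and> \<alpha>1 < \<alpha>2 \<and> \<alpha>2 \<le> 1 \<longrightarrow>
           avoid_hitting_cost P w \<alpha>1 t {} s \<le> avoid_hitting_cost P w \<alpha>2 t {} s)"
proof -
  interpret evaporating_network P w E s t
    by unfold_locales (use assms in auto)
  show ?thesis
    using avoid_hitting_cost_tendsto_0 avoid_hitting_cost_1_eq_hitting_cost
      avoid_hitting_cost_tendsto_1 avoid_hitting_cost_mono
    by auto
qed

end
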